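(* Let $A=\prod_{i=1}^n A_i$ with each $A_i\in\{\mathsf P^1,\mathbb F_2\}$, with the product bicharacter. Let $\Gamma\subseteq 2^{[n]}$ and $P=\mathop{\ast}_{\gamma\in\Gamma}P_\gamma$ with each $P_\gamma$ a probability distribution on $A$ vanishing outside $\{e:\operatorname{supp}(e)\subseteq\gamma\}$. Let $E(a)=\sum_{e\in A}\langle a,e\rangle P(e)$ and assume $E(a)\neq0$ for all $a\in A$. Define the canonical moments $F(a)=\prod_{b\le a}E(b)^{\mu(b,a)}$ with $\mu(b,a)=(-1)^{|a|-|b|}$ for $b\le a$. Then (1) $E(a)=\prod_{b\le a}F(b)$ for all $a\in A$; and (2) if $a\in A$ satisfies $\operatorname{supp}(a)\not\subseteq\gamma$ for all $\gamma\in\Gamma$, then $F(a)=1$.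
   Context: Bicharacter: on $\mathsf P^1=\{I,X,Y,Z\}$ (Paulis modulo phase) $\langle a,b\rangle=\pm1$ according to commutation/anticommutation; on $\mathbb F_2$, $\langle x,y\rangle=(-1)^{xy}$; on $A$ the product over coordinates. $\operatorname{supp}(a)=\{i:a_i\neq I\}$, $|a|=|\operatorname{supp}(a)|$. Substring order: $b\le a$ iff for every $i$ either $b_i=I$ or $b_i=a_i$. Convolution: $(f\ast g)(a)=\sum_b f(b)g(ab^{-1})$. *)

theory Defs
  imports Complex_Main
begin

text \<open>Single-site alphabet. On a Pauli site (P^1) all four letters occur;
on an F_2 site only PI (=0) and PX (=1) occur.\<close>
datatype pauli = PI | PX | PY | PZ

text \<open>Site kinds: True = Pauli site P^1, False = F_2 site.\<close>

text \<open>Group law at one site (Pauli product modulo phase; on F_2 this is addition).\<close>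
fun site_mult :: "pauli \<Rightarrow> pauli \<Rightarrow> pauli" where
  "site_mult PI b = b"
| "site_mult a PI = a"
| "site_mult PX PX = PI" | "site_mult PY PY = PI" | "site_mult PZ PZ = PI"
| "site_mult PX PY = PZ" | "site_mult PY PX = PZ"
| "site_mult PX PZ = PY" | "site_mult PZ PX = PY"
| "site_mult PY PZ = PX" | "site_mult PZ PY = PX"

definition site_inv :: "pauli \<Rightarrow> pauli" where "site_inv a = a"

text \<open>Site bicharacter: commutation sign on P^1, (-1)^{xy} on F_2.\<close>
definition site_char :: "bool \<Rightarrow> pauli \<Rightarrow> pauli \<Rightarrow> real" where
  "site_char pauli_site a b =
     (if pauli_site then (if a = PI \<or> b = PI \<or> a = b then 1 else -1)
      else (if a = PX \<and> b = PX then -1 else 1))"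

text \<open>The group A = prod_{i<n} A_i, sites indexed by 0..n-1.\<close>
definition carrierA :: "nat \<Rightarrow> (nat \<Rightarrow> bool) \<Rightarrow> (nat \<Rightarrow> pauli) set" where
  "carrierA n kind = {a. \<forall>i. (i < n \<longrightarrow> (\<not> kind i \<longrightarrow> a i \<in> {PI, PX})) \<and> (n \<le> i \<longrightarrow> a i = PI)}"

definition multA :: "(nat \<Rightarrow> pauli) \<Rightarrow> (nat \<Rightarrow> pauli) \<Rightarrow> (nat \<Rightarrow> pauli)" where
  "multA a b = (\<lambda>i. site_mult (a i) (b i))"

definition invA :: "(nat \<Rightarrow> pauli) \<Rightarrow> (nat \<Rightarrow> pauli)" where
  "invA a = (\<lambda>i. site_inv (a i))"

definition oneA :: "nat \<Rightarrow> pauli" where "oneA = (\<lambda>i. PI)"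

definition charA :: "nat \<Rightarrow> (nat \<Rightarrow> bool) \<Rightarrow> (nat \<Rightarrow> pauli) \<Rightarrow> (nat \<Rightarrow> pauli) \<Rightarrow> real" where
  "charA n kind a b = (\<Prod>i<n. site_char (kind i) (a i) (b i))"

definition supp :: "nat \<Rightarrow> (nat \<Rightarrow> pauli) \<Rightarrow> nat set" where
  "supp n a = {i. i < n \<and> a i \<noteq> PI}"

definition substr_le :: "nat \<Rightarrow> (nat \<Rightarrow> pauli) \<Rightarrow> (nat \<Rightarrow> pauli) \<Rightarrow> bool" where
  "substr_le n b a = (\<forall>i<n. b i = PI \<or> b i = a i)"

definition conv :: "nat \<Rightarrow> (nat \<Rightarrow> bool) \<Rightarrow> ((nat \<Rightarrow> pauli) \<Rightarrow> real) \<Rightarrow> ((nat \<Rightarrow> pauli) \<Rightarrow> real)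
     \<Rightarrow> (nat \<Rightarrow> pauli) \<Rightarrow> real" where
  "conv n kind f g a = (\<Sum>b\<in>carrierA n kind. f b * g (multA a (invA b)))"

definition delta1 :: "(nat \<Rightarrow> pauli) \<Rightarrow> real" where
  "delta1 a = (if a = oneA then 1 else 0)"

text \<open>Iterated convolution over an enumeration of \<Gamma> (order irrelevant, A abelian).\<close>
definition bigconv :: "nat \<Rightarrow> (nat \<Rightarrow> bool) \<Rightarrow> nat set list \<Rightarrow> (nat set \<Rightarrow> (nat \<Rightarrow> pauli) \<Rightarrow> real)
     \<Rightarrow> (nat \<Rightarrow> pauli) \<Rightarrow> real" where
  "bigconv n kind gs Pg = foldr (\<lambda>\<gamma> acc. conv n kind (Pg \<gamma>) acc) gs delta1"

definition is_distribution :: "nat \<Rightarrow> (nat \<Rightarrow> bool) \<Rightarrow> ((nat \<Rightarrow> pauli) \<Rightarrow> real) \<Rightarrow> bool" where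
  "is_distribution n kind p \<longleftrightarrow> (\<forall>e. p e \<ge> 0) \<and> (\<forall>e. e \<notin> carrierA n kind \<longrightarrow> p e = 0)
     \<and> (\<Sum>e\<in>carrierA n kind. p e) = 1"

definition moment :: "nat \<Rightarrow> (nat \<Rightarrow> bool) \<Rightarrow> ((nat \<Rightarrow> pauli) \<Rightarrow> real) \<Rightarrow> (nat \<Rightarrow> pauli) \<Rightarrow> real" where
  "moment n kind P a = (\<Sum>e\<in>carrierA n kind. charA n kind a e * P e)"

definition canon_moment :: "nat \<Rightarrow> (nat \<Rightarrow> bool) \<Rightarrow> ((nat \<Rightarrow> pauli) \<Rightarrow> real) \<Rightarrow> (nat \<Rightarrow> pauli) \<Rightarrow> real" where
  "canon_moment n kind E a =
     (\<Prod>b\<in>{b\<in>carrierA n kind. substr_le n b a}.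
        E b powi ((-1::int) ^ (card (supp n a) - card (supp n b))))"

end

theory Submission
  imports Defs
begin

(* The moment transform is a character transform: since <a,-> is multiplicative on A, it turns
   the convolution P into the pointwise product of the moments E_gamma of the factors, and
   E_gamma(a) depends only on the sites of a inside gamma.

   Both claims come from one cancellation. If c <= a and i is a site where c is trivial but a is
   not, toggling site i pairs off the strings b with c <= b <= a, and mu changes sign along each
   pair. For (1), swapping the products in prod_{b <= a} F(b) = prod_{c <= b <= a} E(c)^mu(c,b)
   leaves E(c)^0 for every c < a. For (2), F is multiplicative in E, and for each gamma a site
   of supp(a) outside gamma cancels the factors E_gamma(b)^mu(b,a) in pairs. *)

instance pauli :: finite
proof
  have "UNIV = {PI, PX, PY, PZ}"
    using pauli.exhaust by blast
  then show "finite (UNIV :: pauli set)"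
    by (metis finite.emptyI finite_insert)
qed

lemma finite_carrierA: "finite (carrierA n k)"
  by (rule finite_subset[OF _ finite_set_of_finite_funs[of "{..<n}" UNIV PI]])
     (auto simp: carrierA_def)

lemma site_mult_cancel: "site_mult (site_mult x y) y = x"
  by (cases x; cases y; simp)

lemma site_char_mult:
  assumes "\<not> k \<Longrightarrow> a \<in> {PI, PX} \<and> b \<in> {PI, PX} \<and> c \<in> {PI, PX}"
  shows "site_char k a (site_mult b c) = site_char k a b * site_char k a c"
  using assms by (cases a; cases b; cases c; cases k; simp add: site_char_def)

lemma site_char_PI_right: "site_char k a PI = 1"
  by (simp add: site_char_def)

lemma oneA_in_carrierA: "oneA \<in> carrierA n k"
  by (simp add: carrierA_def oneA_def)

lemma multA_in_carrierA:
  "e \<in> carrierA n k \<Longrightarrow> b \<in> carrierA n k \<Longrightarrow> multA e b \<in> carrierA n k"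
  unfolding carrierA_def multA_def by (fastforce elim!: site_mult.elims)

lemma multA_cancel: "multA (multA e b) b = e"
  by (simp add: multA_def site_mult_cancel)

lemma invA_eq: "invA b = b"
  by (simp add: invA_def site_inv_def)

lemma charA_mult:
  assumes "a \<in> carrierA n k" "e \<in> carrierA n k" "b \<in> carrierA n k"
  shows "charA n k a (multA e b) = charA n k a e * charA n k a b"
  unfolding charA_def multA_def prod.distrib[symmetric]
  using assms by (intro prod.cong refl site_char_mult) (auto simp: carrierA_def)

lemma charA_oneA: "charA n k a oneA = 1"
  by (simp add: charA_def oneA_def site_char_PI_right)

lemma sum_carrierA_multA_reindex:
  assumes "b \<in> carrierA n k"
  shows "(\<Sum>e\<in>carrierA n k. g (multA e b)) = (\<Sum>e\<in>carrierA n k. g e)"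
  by (rule sum.reindex_bij_witness[where i="\<lambda>e. multA e b" and j="\<lambda>e. multA e b"])
     (auto simp: multA_cancel multA_in_carrierA assms)

lemma moment_conv:
  assumes a: "a \<in> carrierA n k"
  shows "moment n k (conv n k f g) a = moment n k f a * moment n k g a"
proof -
  have shift: "(\<Sum>e\<in>carrierA n k. charA n k a e * g (multA e b)) = charA n k a b * moment n k g a"
    if b: "b \<in> carrierA n k" for b
  proof -
    have "(\<Sum>e\<in>carrierA n k. charA n k a e * g (multA e b))
        = (\<Sum>e\<in>carrierA n k. charA n k a (multA e b) * g e)"
      using sum_carrierA_multA_reindex[OF b, of "\<lambda>e. charA n k a (multA e b) * g e"]
      by (simp add: multA_cancel)
    also have "\<dots> = charA n k a b * moment n k g a"
      by (simp add: moment_def sum_distrib_left charA_mult[OF a _ b] ac_simps)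
    finally show ?thesis .
  qed
  have "moment n k (conv n k f g) a
      = (\<Sum>e\<in>carrierA n k. \<Sum>b\<in>carrierA n k. f b * (charA n k a e * g (multA e b)))"
    unfolding moment_def conv_def invA_eq by (simp add: sum_distrib_left ac_simps)
  also have "\<dots> = (\<Sum>b\<in>carrierA n k. f b * (\<Sum>e\<in>carrierA n k. charA n k a e * g (multA e b)))"
    by (subst sum.swap) (simp add: sum_distrib_left)
  also have "\<dots> = (\<Sum>b\<in>carrierA n k. f b * (charA n k a b * moment n k g a))"
    by (rule sum.cong[OF refl]) (simp add: shift)
  also have "\<dots> = moment n k f a * moment n k g a"
    by (simp add: moment_def sum_distrib_right ac_simps)
  finally show ?thesis .
qed

lemma moment_delta1: "moment n k delta1 a = 1"
  using oneA_in_carrierA[of n k] finite_carrierA[of n k]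
  by (simp add: moment_def delta1_def charA_oneA if_distrib sum.delta' cong: if_cong)

lemma moment_bigconv:
  "a \<in> carrierA n k \<Longrightarrow> moment n k (bigconv n k gs Pg) a = (\<Prod>\<gamma>\<leftarrow>gs. moment n k (Pg \<gamma>) a)"
  by (induction gs) (simp_all add: bigconv_def moment_delta1 moment_conv)

definition mobius_sign :: "nat \<Rightarrow> (nat \<Rightarrow> pauli) \<Rightarrow> (nat \<Rightarrow> pauli) \<Rightarrow> int" where
  "mobius_sign n b a = (-1) ^ (card (supp n a) - card (supp n b))"

lemma canon_moment_mobius_sign:
  "canon_moment n k E a = (\<Prod>b\<in>{b\<in>carrierA n k. substr_le n b a}. E b powi mobius_sign n b a)"
  by (simp add: canon_moment_def mobius_sign_def)

lemma substr_le_refl: "substr_le n a a"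
  by (simp add: substr_le_def)

lemma substr_le_trans:
  assumes "substr_le n c b" "substr_le n b a"
  shows "substr_le n c a"
  unfolding substr_le_def
proof (intro allI impI)
  fix i assume "i < n"
  then have "c i = PI \<or> c i = b i" "b i = PI \<or> b i = a i"
    using assms by (auto simp: substr_le_def)
  then show "c i = PI \<or> c i = a i"
    by auto
qed

lemma substr_le_antisym:
  assumes "a \<in> carrierA n k" "b \<in> carrierA n k" "substr_le n a b" "substr_le n b a"
  shows "a = b"
proof
  fix i
  show "a i = b i"
  proof (cases "i < n")
    case True
    then have "a i = PI \<or> a i = b i" "b i = PI \<or> b i = a i"
      using assms(3,4) by (simp_all add: substr_le_def)
    then show ?thesis
      by auto
  qed (use assms(1,2) in \<open>simp add: carrierA_def\<close>)
qed

lemma substr_le_less_site: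
  assumes "a \<in> carrierA n k" "c \<in> carrierA n k" "substr_le n c a" "c \<noteq> a"
  obtains i where "i < n" "c i = PI" "a i \<noteq> PI"
proof -
  have "\<not> substr_le n a c"
    using assms substr_le_antisym by blast
  then obtain i where "i < n" "c i \<noteq> a i"
    by (auto simp: substr_le_def)
  then show ?thesis
    using that assms(3) by (auto simp: substr_le_def)
qed

lemma supp_mono: "substr_le n c a \<Longrightarrow> supp n c \<subseteq> supp n a"
  unfolding supp_def substr_le_def by auto

lemma finite_supp: "finite (supp n a)"
  by (simp add: supp_def)

lemma card_supp_upd:
  assumes "i < n" "c i = PI" "y \<noteq> PI"
  shows "card (supp n (c(i := y))) = Suc (card (supp n c))"
proof -
  have "supp n (c(i := y)) = insert i (supp n c)" "i \<notin> supp n c"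
    using assms by (auto simp: supp_def)
  then show ?thesis
    by (simp add: finite_supp)
qed

lemma mobius_sign_upd_left:
  assumes "substr_le n (b(i := y)) a" "i < n" "b i = PI" "y \<noteq> PI"
  shows "mobius_sign n (b(i := y)) a = - mobius_sign n b a"
proof -
  have "Suc (card (supp n b)) \<le> card (supp n a)"
    using card_mono[OF finite_supp supp_mono[OF assms(1)]] card_supp_upd[of i n b y] assms(2-4) by simp
  then have "card (supp n a) - card (supp n b) = Suc (card (supp n a) - card (supp n (b(i := y))))"
    using card_supp_upd[of i n b y] assms(2-4) by simp
  then show ?thesis
    by (simp add: mobius_sign_def)
qed

lemma mobius_sign_upd_right:
  assumes "substr_le n c b" "i < n" "b i = PI" "y \<noteq> PI"
  shows "mobius_sign n c (b(i := y)) = - mobius_sign n c b"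
proof -
  have "card (supp n c) \<le> card (supp n b)"
    using card_mono[OF finite_supp supp_mono[OF assms(1)]] .
  then have "card (supp n (b(i := y))) - card (supp n c) = Suc (card (supp n b) - card (supp n c))"
    using card_supp_upd[of i n b y] assms(2-4) by simp
  then show ?thesis
    by (simp add: mobius_sign_def)
qed

lemma prod_split_site:
  fixes g :: "(nat \<Rightarrow> pauli) \<Rightarrow> 'b::comm_monoid_mult"
  assumes "finite X" "x \<noteq> PI"
    and "\<And>b. b \<in> X \<Longrightarrow> b i = PI \<or> b i = x"
    and "\<And>b. b \<in> X \<Longrightarrow> b(i := PI) \<in> X" "\<And>b. b \<in> X \<Longrightarrow> b(i := x) \<in> X"
  shows "prod g X = (\<Prod>b\<in>{b\<in>X. b i = PI}. g b * g (b(i := x)))"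
proof -
  define X0 where "X0 = {b\<in>X. b i = PI}"
  have X: "X = X0 \<union> (\<lambda>b. b(i := x)) ` X0"
  proof (intro equalityI subsetI)
    fix b assume b: "b \<in> X"
    show "b \<in> X0 \<union> (\<lambda>b. b(i := x)) ` X0"
    proof (cases "b i = PI")
      case False
      then have "b = (b(i := PI))(i := x)"
        using assms(3)[OF b] by auto
      moreover have "b(i := PI) \<in> X0"
        using assms(4)[OF b] by (simp add: X0_def)
      ultimately show ?thesis
        by blast
    qed (use b in \<open>simp add: X0_def\<close>)
  qed (use assms(5) in \<open>auto simp: X0_def\<close>)
  have "inj_on (\<lambda>b. b(i := x)) X0"
  proof (rule inj_onI)
    fix b c assume b: "b \<in> X0" and c: "c \<in> X0" and eq: "b(i := x) = c(i := x)"
    show "b = c"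
    proof
      fix j
      show "b j = c j"
        using b c fun_cong[OF eq, of j] by (cases "j = i") (auto simp: X0_def)
    qed
  qed
  moreover have "X0 \<inter> (\<lambda>b. b(i := x)) ` X0 = {}"
    using assms(2) by (auto simp: X0_def)
  ultimately have "prod g X = prod g X0 * (\<Prod>b\<in>X0. g (b(i := x)))"
    using assms(1) by (subst X) (simp add: prod.union_disjoint prod.reindex X0_def)
  then show ?thesis
    by (simp add: prod.distrib X0_def)
qed

lemma prod_substr_interval_alternating:
  fixes n :: nat and k :: "nat \<Rightarrow> bool" and a c :: "nat \<Rightarrow> pauli"
    and f :: "(nat \<Rightarrow> pauli) \<Rightarrow> real" and s :: "(nat \<Rightarrow> pauli) \<Rightarrow> int"
  defines "I \<equiv> {b\<in>carrierA n k. substr_le n c b \<and> substr_le n b a}"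
  assumes a: "a \<in> carrierA n k" and i: "i < n" "c i = PI" "a i \<noteq> PI"
    and f_upd: "\<And>b. b \<in> I \<Longrightarrow> b i = PI \<Longrightarrow> f (b(i := a i)) = f b"
    and f_nonzero: "\<And>b. b \<in> I \<Longrightarrow> f b \<noteq> 0"
    and s_upd: "\<And>b. b \<in> I \<Longrightarrow> b i = PI \<Longrightarrow> s (b(i := a i)) = - s b"
  shows "(\<Prod>b\<in>I. f b powi s b) = 1"
proof -
  have "(\<Prod>b\<in>I. f b powi s b) = (\<Prod>b\<in>{b\<in>I. b i = PI}. f b powi s b * f b powi (- s b))"
  proof (subst prod_split_site[where i=i and x="a i"])
    show "finite I"
      using finite_carrierA by (simp add: I_def)
    show "b i = PI \<or> b i = a i" if "b \<in> I" for b
      using that i by (auto simp: I_def substr_le_def)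
    show "b(i := PI) \<in> I" if "b \<in> I" for b
      using that i by (auto simp: I_def substr_le_def carrierA_def)
    show "b(i := a i) \<in> I" if "b \<in> I" for b
      using that i a by (auto simp: I_def substr_le_def carrierA_def)
  qed (auto simp: i f_upd s_upd)
  also have "\<dots> = 1"
    using f_nonzero by (intro prod.neutral) (simp add: power_int_minus power_int_not_zero)
  finally show ?thesis .
qed

lemma prod_canon_moment_substr_le:
  fixes E :: "(nat \<Rightarrow> pauli) \<Rightarrow> real"
  assumes a: "a \<in> carrierA n k"
    and nonzero: "\<And>c. c \<in> carrierA n k \<Longrightarrow> substr_le n c a \<Longrightarrow> E c \<noteq> 0"
  shows "(\<Prod>b\<in>{b\<in>carrierA n k. substr_le n b a}. canon_moment n k E b) = E a"
proof -
  let ?S = "{b\<in>carrierA n k. substr_le n b a}"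
  have fin: "finite ?S"
    using finite_carrierA by simp
  have "(\<Prod>b\<in>?S. canon_moment n k E b)
      = (\<Prod>b\<in>?S. \<Prod>c\<in>{c\<in>?S. substr_le n c b}. E c powi mobius_sign n c b)"
    unfolding canon_moment_mobius_sign
    by (intro prod.cong refl arg_cong[where f="\<lambda>C. prod _ C"]) (auto intro: substr_le_trans)
  also have "\<dots> = (\<Prod>c\<in>?S. \<Prod>b\<in>{b\<in>?S. substr_le n c b}. E c powi mobius_sign n c b)"
    by (rule prod.swap_restrict[OF fin fin])
  also have "\<dots> = (\<Prod>c\<in>?S. if c = a then E a else 1)"
  proof (rule prod.cong[OF refl])
    fix c assume c: "c \<in> ?S"
    show "(\<Prod>b\<in>{b\<in>?S. substr_le n c b}. E c powi mobius_sign n c b) = (if c = a then E a else 1)"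
    proof (cases "c = a")
      case True
      then have "{b\<in>?S. substr_le n c b} = {a}"
        using a substr_le_antisym by (auto simp: substr_le_refl)
      then show ?thesis
        using True by (simp add: mobius_sign_def)
    next
      case False
      then obtain i where i: "i < n" "c i = PI" "a i \<noteq> PI"
        using a c substr_le_less_site by blast
      have "{b\<in>?S. substr_le n c b} = {b\<in>carrierA n k. substr_le n c b \<and> substr_le n b a}"
        by blast
      moreover have "(\<Prod>b\<in>{b\<in>carrierA n k. substr_le n c b \<and> substr_le n b a}.
          E c powi mobius_sign n c b) = 1"
        using a i c nonzero mobius_sign_upd_right
        by (intro prod_substr_interval_alternating) auto
      ultimately show ?thesis
        using False by simp
    qed
  qed
  also have "\<dots> = E a"
    using a fin by (simp add: prod.delta' substr_le_refl)
  finally show ?thesis .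
qed

lemma canon_moment_cong:
  "(\<And>b. b \<in> carrierA n k \<Longrightarrow> E b = E' b) \<Longrightarrow> canon_moment n k E a = canon_moment n k E' a"
  unfolding canon_moment_def by (rule prod.cong) auto

lemma power_int_prod:
  fixes f :: "'a \<Rightarrow> 'b::field"
  shows "(\<Prod>x\<in>A. f x) powi m = (\<Prod>x\<in>A. f x powi m)"
  by (induction A rule: infinite_finite_induct) (simp_all add: power_int_mult_distrib)

lemma canon_moment_prod:
  "canon_moment n k (\<lambda>c. \<Prod>\<gamma>\<in>G. E \<gamma> c) a = (\<Prod>\<gamma>\<in>G. canon_moment n k (E \<gamma>) a)"
  unfolding canon_moment_def power_int_prod by (rule prod.swap)

lemma canon_moment_eq_1_if_independent:
  fixes f :: "(nat \<Rightarrow> pauli) \<Rightarrow> real"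
  assumes a: "a \<in> carrierA n k" and i: "i < n" "a i \<noteq> PI"
    and independent: "\<And>b y. f (b(i := y)) = f b"
    and nonzero: "\<And>b. b \<in> carrierA n k \<Longrightarrow> substr_le n b a \<Longrightarrow> f b \<noteq> 0"
  shows "canon_moment n k f a = 1"
proof -
  have "{b\<in>carrierA n k. substr_le n b a} = {b\<in>carrierA n k. substr_le n oneA b \<and> substr_le n b a}"
    by (auto simp: substr_le_def oneA_def)
  moreover have "mobius_sign n (b(i := a i)) a = - mobius_sign n b a"
    if "substr_le n b a" "b i = PI" for b
    using that i by (intro mobius_sign_upd_left) (auto simp: substr_le_def)
  then have "(\<Prod>b\<in>{b\<in>carrierA n k. substr_le n oneA b \<and> substr_le n b a}.
      f b powi mobius_sign n b a) = 1"
    using a i independent nonzero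
    by (intro prod_substr_interval_alternating) (auto simp: oneA_def)
  ultimately show ?thesis
    by (simp add: canon_moment_mobius_sign)
qed

lemma moment_upd_outside_support:
  assumes "\<And>e. \<not> supp n e \<subseteq> \<gamma> \<Longrightarrow> P e = 0" "i \<notin> \<gamma>"
  shows "moment n k P (c(i := y)) = moment n k P c"
  unfolding moment_def
proof (rule sum.cong[OF refl])
  fix e
  show "charA n k (c(i := y)) e * P e = charA n k c e * P e"
  proof (cases "supp n e \<subseteq> \<gamma>")
    case True
    then have "charA n k (c(i := y)) e = charA n k c e"
      using assms(2) unfolding charA_def supp_def
      by (intro prod.cong refl) (auto simp: site_char_PI_right)
    then show ?thesis
      by simp
  qed (simp add: assms(1))
qed

lemma canon_moment_prod_moment_eq_1:
  assumes a: "a \<in> carrierA n k" and "finite G"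
    and support: "\<forall>\<gamma>\<in>G. \<forall>e. \<not> supp n e \<subseteq> \<gamma> \<longrightarrow> P \<gamma> e = 0"
    and uncovered: "\<forall>\<gamma>\<in>G. \<not> supp n a \<subseteq> \<gamma>"
    and nonzero: "\<forall>c\<in>carrierA n k. (\<Prod>\<gamma>\<in>G. moment n k (P \<gamma>) c) \<noteq> 0"
  shows "canon_moment n k (\<lambda>c. \<Prod>\<gamma>\<in>G. moment n k (P \<gamma>) c) a = 1"
  unfolding canon_moment_prod
proof (rule prod.neutral, rule ballI)
  fix \<gamma> assume \<gamma>: "\<gamma> \<in> G"
  then obtain i where i: "i \<in> supp n a" "i \<notin> \<gamma>"
    using uncovered by blast
  have "moment n k (P \<gamma>) (b(i := y)) = moment n k (P \<gamma>) b" for b y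
    using support \<gamma> i(2) by (intro moment_upd_outside_support) auto
  moreover have "moment n k (P \<gamma>) c \<noteq> 0" if "c \<in> carrierA n k" for c
    using nonzero that \<gamma> \<open>finite G\<close> by auto
  ultimately show "canon_moment n k (moment n k (P \<gamma>)) a = 1"
    using a i(1) by (intro canon_moment_eq_1_if_independent) (auto simp: supp_def)
qed

theorem lemma5:
  fixes n :: nat and kind :: "nat \<Rightarrow> bool"
    and gs :: "nat set list" and Pg :: "nat set \<Rightarrow> (nat \<Rightarrow> pauli) \<Rightarrow> real"
  assumes "distinct gs"
    and "\<forall>\<gamma>\<in>set gs. \<gamma> \<subseteq> {..<n}"
    and "\<forall>\<gamma>\<in>set gs. is_distribution n kind (Pg \<gamma>)"
    and "\<forall>\<gamma>\<in>set gs. \<forall>e. \<not> supp n e \<subseteq> \<gamma> \<longrightarrow> Pg \<gamma> e = 0"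
    and "\<forall>a\<in>carrierA n kind. moment n kind (bigconv n kind gs Pg) a \<noteq> 0"
  shows "(\<forall>a\<in>carrierA n kind.
            moment n kind (bigconv n kind gs Pg) a =
            (\<Prod>b\<in>{b\<in>carrierA n kind. substr_le n b a}.
               canon_moment n kind (moment n kind (bigconv n kind gs Pg)) b))
       \<and> (\<forall>a\<in>carrierA n kind. (\<forall>\<gamma>\<in>set gs. \<not> supp n a \<subseteq> \<gamma>) \<longrightarrow>
            canon_moment n kind (moment n kind (bigconv n kind gs Pg)) a = 1)"
proof -
  let ?E = "moment n kind (bigconv n kind gs Pg)"
  let ?E\<gamma> = "\<lambda>\<gamma>. moment n kind (Pg \<gamma>)"
  have E_eq: "?E c = (\<Prod>\<gamma>\<in>set gs. ?E\<gamma> \<gamma> c)" if "c \<in> carrierA n kind" for c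
    using moment_bigconv[OF that] by (simp add: prod.distinct_set_conv_list[OF assms(1)])
  have inversion: "?E a = (\<Prod>b\<in>{b\<in>carrierA n kind. substr_le n b a}. canon_moment n kind ?E b)"
    if "a \<in> carrierA n kind" for a
    using that assms(5) by (simp add: prod_canon_moment_substr_le)
  have vanishing: "canon_moment n kind ?E a = 1"
    if "a \<in> carrierA n kind" and "\<forall>\<gamma>\<in>set gs. \<not> supp n a \<subseteq> \<gamma>" for a
  proof -
    have "canon_moment n kind ?E a = canon_moment n kind (\<lambda>c. \<Prod>\<gamma>\<in>set gs. ?E\<gamma> \<gamma> c) a"
      by (rule canon_moment_cong) (simp add: E_eq)
    also have "\<dots> = 1"
      using that assms(4,5) by (intro canon_moment_prod_moment_eq_1) (simp_all add: E_eq)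
    finally show ?thesis .
  qed
  show ?thesis
    using inversion vanishing by blast
qed

end
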